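(* Consider the combined heat and power network described in the context, operating in Mode 1, after a step change in the electrical load $p^L$. At an equilibrium, the generation deviations $p^G$, the heat pump powers $p^P=(p^P_j)_{j\in H_e}$ and $p^U=(D_j\omega_j)_{j\in N_e}$ form a solution of $$\min_{p^G,p^P,p^U}\ \tfrac12(p^G)^TQ_ep^G+\tfrac12(p^P)^TQ_pp^P+\tfrac12(p^U)^TQ_up^U\quad\text{s.t.}\quad \mathbf 1^Tp^G=\mathbf 1^Tp^L+\mathbf 1^Tp^P+\mathbf 1^Tp^U,$$ where $Q_e=\mathrm{diag}(Q_{e,jj})_{j\in N_e^G}$, $Q_p=\mathrm{diag}(1/a_{1,j})_{j\in H_e}$, $Q_u=\mathrm{diag}(1/D_j)_{j\in N_e}$. Moreover, given the heat pump power consumption $\bar p^P$ in this solution (so that $h^P_{j_k}=C_o\bar p^P_{i_k}$, $k\in H$), the equilibrium deviations $h^G=(h^G_j)_{j\in E_h^G}$ of the conventional heat sources form the solution of $$\min_{h^G}\ \tfrac12(h^G)^TQ_hh^G\quad\text{s.t.}\quad \mathbf 1^Th^G=\mathbf 1^T(h^L-h^P),$$ where $Q_h=\mathrm{diag}(Q_{h,jj})_{j\in E_h^G}$.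
   Context: Power network: a directed graph $(N_e,E_e)$ with buses $N_e$ and lines $E_e$, arbitrarily oriented. $N_e^G\subseteq N_e$ is the set of generator buses and $H_e\subseteq N_e$ the set of buses to which heat pumps are connected. Heat network: a directed graph $(N_h,E_h)$, each edge $j$ oriented along its mass flow with inlet node $s(j)$ and outlet node $t(j)$; among the edges are heat-pump edges $H_h$, conventional heat source edges $E_h^G$ and heat-load edges $E_h^L$. Heat pumps are indexed by a finite set $H$; heat pump $k\in H$ is connected to bus $i_k\in H_e$ and corresponds to edge $j_k\in H_h$. Lines: for $(i,j)\in E_e$, $\dot\eta_{ij}=\omega_i-\omega_j$, $p_{ij}=B_{ij}\sin(\eta_{ij})-p^{\mathrm{nom}}_{ij}$, $B_{ij}>0$. Every bus $j\in N_e$: $M_j\dot\omega_j=-p^L_j-p^P_j+p^G_j-p^U_j+\sum_{i:(i,j)\in E_e}p_{ij}-\sum_{k:(j,k)\in E_e}p_{jk}$, with $M_j>0$, $p^U_j=D_j\omega_j$, $D_j>0$, $p^L_j$ constant, $p^G_j=0$ for $j\notin N_e^G$, $p^P_j=0$ for $j\notin H_e$. Heat network ($\rho C_p=1$), constant positive mass flows $q^E_j$, volumes $V^E_j,V^N_k>0$: $V^E_j\dot T^E_j=q^E_j(T^N_{s(j)}-T^E_j)+h^G_j+h^P_j-h^L_j$ for each edge $j$, $V^N_k\dot T^N_k=\sum_{j:t(j)=k}q^E_j(T^E_j-T^N_k)$ for each node $k$, where $h^G_j=0$ unless $j\in E_h^G$, $h^P_j=0$ unless $j\in H_h$, $h^L_j=0$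 unless $j\in E_h^L$, $h^L_j$ constant. In matrix form $V\dot T=-A_hT+\mathrm{col}(h^G+h^P-h^L,\mathbf 0)$ with $T=\mathrm{col}(T^E,T^N)$, $V=\mathrm{diag}(V^E,V^N)$, where $A_h\mathbf 1=0$, $\mathbf 1^TA_h=0$ and $A_h+A_h^T$ is positive semidefinite with a simple zero eigenvalue. Average temperature $\bar T=\mathbf 1^TVT/(\mathbf 1^TV\mathbf 1)$. Generation control: $\dot p^G_j=-p^G_j-\frac{1}{Q_{e,jj}}\omega_j$ ($j\in N_e^G$), $\dot h^G_j=-h^G_j-\frac{1}{Q_{h,jj}}\bar T$ ($j\in E_h^G$), with $Q_{e,jj},Q_{h,jj}>0$. Heat pump: $h^P_{j_k}=C_op^P_{i_k}$, $k\in H$, constant $C_o$. Mode 1: $p^P_j=a_{1,j}\omega_j$ for $j\in H_e$, constants $a_{1,j}>0$. *)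

theory Defs
  imports Complex_Main
begin

definition line_flow :: "('b \<Rightarrow> 'b \<Rightarrow> real) \<Rightarrow> ('b \<Rightarrow> 'b \<Rightarrow> real) \<Rightarrow> ('b \<Rightarrow> 'b \<Rightarrow> real) \<Rightarrow> 'b \<Rightarrow> 'b \<Rightarrow> real"
  where "line_flow B pnom eta i j = B i j * sin (eta i j) - pnom i j"

text \<open>Index set of the heat state T = col(T^E, T^N): edges (Inl) and nodes (Inr).\<close>
definition heat_idx :: "'e set \<Rightarrow> 'n set \<Rightarrow> ('e + 'n) set"
  where "heat_idx Eh Nh = Eh <+> Nh"

text \<open>The matrix A_h applied to a vector T, read off from the component equations
  V^E_j dT^E_j = q_j (T^N_{s j} - T^E_j) + ...,  V^N_k dT^N_k = sum_{t j = k} q_j (T^E_j - T^N_k),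
  i.e. V dT = - A_h T + col(h^G + h^P - h^L, 0).\<close>
definition heat_Ah :: "'e set \<Rightarrow> ('e \<Rightarrow> real) \<Rightarrow> ('e \<Rightarrow> 'n) \<Rightarrow> ('e \<Rightarrow> 'n) \<Rightarrow> ('e + 'n \<Rightarrow> real) \<Rightarrow> ('e + 'n \<Rightarrow> real)"
  where "heat_Ah Eh q s t T = (\<lambda>x. case x of
            Inl j \<Rightarrow> q j * (T (Inl j) - T (Inr (s j)))
          | Inr k \<Rightarrow> (\<Sum>j\<in>{j\<in>Eh. t j = k}. q j * (T (Inr k) - T (Inl j))))"

definition avg_temp :: "'e set \<Rightarrow> 'n set \<Rightarrow> ('e \<Rightarrow> real) \<Rightarrow> ('n \<Rightarrow> real) \<Rightarrow> ('e \<Rightarrow> real) \<Rightarrow> ('n \<Rightarrow> real) \<Rightarrow> real"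
  where "avg_temp Eh Nh VE VN TE TN =
     ((\<Sum>j\<in>Eh. VE j * TE j) + (\<Sum>k\<in>Nh. VN k * TN k)) / ((\<Sum>j\<in>Eh. VE j) + (\<Sum>k\<in>Nh. VN k))"

definition power_cost :: "'b set \<Rightarrow> 'b set \<Rightarrow> 'b set \<Rightarrow> ('b \<Rightarrow> real) \<Rightarrow> ('b \<Rightarrow> real) \<Rightarrow> ('b \<Rightarrow> real)
     \<Rightarrow> ('b \<Rightarrow> real) \<Rightarrow> ('b \<Rightarrow> real) \<Rightarrow> ('b \<Rightarrow> real) \<Rightarrow> real"
  where "power_cost Ne NeG He Qe a1 D pG pP pU =
     1/2 * (\<Sum>j\<in>NeG. Qe j * (pG j)\<^sup>2) + 1/2 * (\<Sum>j\<in>He. (1 / a1 j) * (pP j)\<^sup>2)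
     + 1/2 * (\<Sum>j\<in>Ne. (1 / D j) * (pU j)\<^sup>2)"

definition power_feasible :: "'b set \<Rightarrow> 'b set \<Rightarrow> 'b set \<Rightarrow> ('b \<Rightarrow> real) \<Rightarrow> ('b \<Rightarrow> real) \<Rightarrow> ('b \<Rightarrow> real) \<Rightarrow> ('b \<Rightarrow> real) \<Rightarrow> bool"
  where "power_feasible Ne NeG He pL pG pP pU \<longleftrightarrow>
     (\<Sum>j\<in>NeG. pG j) = (\<Sum>j\<in>Ne. pL j) + (\<Sum>j\<in>He. pP j) + (\<Sum>j\<in>Ne. pU j)"

definition heat_cost :: "'e set \<Rightarrow> ('e \<Rightarrow> real) \<Rightarrow> ('e \<Rightarrow> real) \<Rightarrow> real"
  where "heat_cost EhG Qh hG = 1/2 * (\<Sum>j\<in>EhG. Qh j * (hG j)\<^sup>2)"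

text \<open>Constraint 1^T h^G = 1^T (h^L - h^P) (h^L, h^P vanish outside E_h^L, H_h).\<close>
definition heat_feasible :: "'e set \<Rightarrow> 'e set \<Rightarrow> ('e \<Rightarrow> real) \<Rightarrow> ('e \<Rightarrow> real) \<Rightarrow> ('e \<Rightarrow> real) \<Rightarrow> bool"
  where "heat_feasible Eh EhG hL hP hG \<longleftrightarrow> (\<Sum>j\<in>EhG. hG j) = (\<Sum>j\<in>Eh. hL j - hP j)"

end

theory Submission
  imports Defs
begin

text \<open>At an equilibrium the angle differences are constant, so omega_i = omega_j across every
  line and, the power network being connected, the frequency is a single value w. Summing the
  bus equations, the line flows cancel and the power balance constraint holds. The equilibrium
  relations say that all generators, heat pumps and damping terms have the same marginal cost:
  Q_e,jj p^G_j = -w, p^P_j / a_1,j = w and p^U_j / D_j = w (p^G sits on the other side of the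
  constraint). A separable convex quadratic cost lies above its tangent hyperplane at such a
  point, and this hyperplane is constant on the constraint set, so the point is a minimiser.
  For the heat network, 1^T A_h = 0 turns the summed equilibrium equations into the heat
  balance, and every conventional heat source has the same marginal cost -Tbar.\<close>

lemma constant_on_connected:
  assumes "\<forall>(i, j)\<in>E. f i = f j" and "\<forall>i\<in>N. \<forall>j\<in>N. (i, j) \<in> (E \<union> E\<inverse>)\<^sup>*"
  obtains c where "\<forall>j\<in>N. f j = c"
proof -
  have eq: "f i = f j" if "(i, j) \<in> (E \<union> E\<inverse>)\<^sup>*" for i j
    using that
  proof (induction rule: rtrancl_induct)
    case base
    then show ?case by simp
  next
    case (step y z)
    then show ?case using assms(1) by auto
  qed
  show thesis
  proof (cases "N = {}")
    case True
    then show thesis using that by blast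
  next
    case False
    then obtain i where "i \<in> N" by blast
    then show thesis using that[of "f i"] eq assms(2) by metis
  qed
qed

lemma sum_inflow_minus_outflow:
  fixes f :: "'a \<Rightarrow> 'a \<Rightarrow> 'b::ab_group_add"
  assumes "finite N" and "E \<subseteq> N \<times> N"
  shows "(\<Sum>j\<in>N. (\<Sum>i\<in>{i. (i, j) \<in> E}. f i j) - (\<Sum>k\<in>{k. (j, k) \<in> E}. f j k)) = 0"
proof -
  have into: "(\<Sum>i\<in>{i. (i, j) \<in> E}. f i j) = (\<Sum>i\<in>N. if (i, j) \<in> E then f i j else 0)" for j
  proof -
    have "{i. (i, j) \<in> E} = {i\<in>N. (i, j) \<in> E}" using assms(2) by auto
    then show ?thesis using sum.inter_filter[OF assms(1)] by simp
  qed
  have out: "(\<Sum>k\<in>{k. (j, k) \<in> E}. f j k) = (\<Sum>k\<in>N. if (j, k) \<in> E then f j k else 0)" for j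
  proof -
    have "{k. (j, k) \<in> E} = {k\<in>N. (j, k) \<in> E}" using assms(2) by auto
    then show ?thesis using sum.inter_filter[OF assms(1)] by simp
  qed
  show ?thesis
    unfolding sum_subtractf into out using sum.swap by simp
qed

lemma sum_weighted_squares_ge_tangent:
  fixes c x y :: "'a \<Rightarrow> real"
  assumes "finite A" and "\<forall>j\<in>A. c j \<ge> 0" and "\<forall>j\<in>A. c j * x j = w"
  shows "(\<Sum>j\<in>A. c j * (x j)\<^sup>2) + 2 * w * ((\<Sum>j\<in>A. y j) - (\<Sum>j\<in>A. x j))
           \<le> (\<Sum>j\<in>A. c j * (y j)\<^sup>2)"
proof -
  have "c j * (x j)\<^sup>2 + 2 * w * (y j - x j) \<le> c j * (y j)\<^sup>2" if "j \<in> A" for j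
  proof -
    have "0 \<le> c j * (y j - x j)\<^sup>2" using assms(2) that by simp
    then show ?thesis using assms(3) that by (auto simp: power2_eq_square algebra_simps)
  qed
  then have "(\<Sum>j\<in>A. c j * (x j)\<^sup>2 + 2 * w * (y j - x j)) \<le> (\<Sum>j\<in>A. c j * (y j)\<^sup>2)"
    by (rule sum_mono)
  then show ?thesis by (simp add: sum.distrib sum_subtractf sum_distrib_left[symmetric])
qed

lemma droop_equilibrium_marginal_cost:
  fixes c x y :: real
  assumes "c \<noteq> 0" and "0 = - x - (1 / c) * y"
  shows "c * x = - y"
  using assms by (simp add: field_simps)

lemma power_cost_minimal:
  assumes "finite Ne" and "NeG \<subseteq> Ne" and "He \<subseteq> Ne"
    and "\<forall>j\<in>NeG. Qe j > 0" and "\<forall>j\<in>He. a1 j > 0" and "\<forall>j\<in>Ne. D j > 0"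
    and "\<forall>j\<in>Ne. \<omega> j = w"
    and "\<forall>j\<in>NeG. 0 = - pG j - (1 / Qe j) * \<omega> j" and "\<forall>j\<in>He. pP j = a1 j * \<omega> j"
    and "\<forall>j\<in>Ne. pU j = D j * \<omega> j"
    and "power_feasible Ne NeG He pL pG pP pU" and "power_feasible Ne NeG He pL g p u"
  shows "power_cost Ne NeG He Qe a1 D pG pP pU \<le> power_cost Ne NeG He Qe a1 D g p u"
proof -
  have "finite NeG" "finite He" using assms(1-3) finite_subset by auto
  have "\<forall>j\<in>NeG. Qe j \<ge> 0" "\<forall>j\<in>He. 1 / a1 j \<ge> 0" "\<forall>j\<in>Ne. 1 / D j \<ge> 0"
    and "\<forall>j\<in>NeG. Qe j * pG j = - w"
    and "\<forall>j\<in>He. 1 / a1 j * pP j = w" "\<forall>j\<in>Ne. 1 / D j * pU j = w"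
    using assms(2-10) droop_equilibrium_marginal_cost by (auto simp: subset_iff)
  note tangent = sum_weighted_squares_ge_tangent[OF \<open>finite NeG\<close> this(1,4), of g]
    sum_weighted_squares_ge_tangent[OF \<open>finite He\<close> this(2,5), of p]
    sum_weighted_squares_ge_tangent[OF assms(1) this(3,6), of u]
  have "- w * ((\<Sum>j\<in>NeG. g j) - (\<Sum>j\<in>NeG. pG j)) + w * ((\<Sum>j\<in>He. p j) - (\<Sum>j\<in>He. pP j))
          + w * ((\<Sum>j\<in>Ne. u j) - (\<Sum>j\<in>Ne. pU j)) = 0"
    using assms(11,12) unfolding power_feasible_def by (simp add: algebra_simps)
  then show ?thesis
    using tangent unfolding power_cost_def by linarith
qed

lemma heat_cost_minimal:
  assumes "finite EhG" and "\<forall>j\<in>EhG. Qh j > 0" and "\<forall>j\<in>EhG. 0 = - hG j - (1 / Qh j) * T"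
    and "heat_feasible Eh EhG hL hP hG" and "heat_feasible Eh EhG hL hP g"
  shows "heat_cost EhG Qh hG \<le> heat_cost EhG Qh g"
proof -
  have "\<forall>j\<in>EhG. Qh j * hG j = - T"
    using assms(2,3) droop_equilibrium_marginal_cost by (metis less_irrefl)
  moreover have "\<forall>j\<in>EhG. Qh j \<ge> 0" using assms(2) by auto
  ultimately show ?thesis
    using sum_weighted_squares_ge_tangent[OF assms(1), of Qh hG "- T" g] assms(4,5)
    unfolding heat_cost_def heat_feasible_def by simp
qed

lemma power_feasible_of_bus_balance:
  assumes "finite Ne" and "Ee \<subseteq> Ne \<times> Ne" and "NeG \<subseteq> Ne" and "He \<subseteq> Ne"
    and "\<forall>j\<in>Ne. 0 = - pL j - pP j + pG j - pU j
                 + (\<Sum>i\<in>{i. (i, j) \<in> Ee}. f i j) - (\<Sum>k\<in>{k. (j, k) \<in> Ee}. f j k)"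
    and "\<forall>j\<in>Ne - NeG. pG j = 0" and "\<forall>j\<in>Ne - He. pP j = 0"
  shows "power_feasible Ne NeG He pL pG pP pU"
proof -
  have "(\<Sum>j\<in>Ne. pG j - pL j - pP j - pU j
          + ((\<Sum>i\<in>{i. (i, j) \<in> Ee}. f i j) - (\<Sum>k\<in>{k. (j, k) \<in> Ee}. f j k))) = 0"
    using assms(5) by (intro sum.neutral) auto
  then have "(\<Sum>j\<in>Ne. pG j) - (\<Sum>j\<in>Ne. pL j) - (\<Sum>j\<in>Ne. pP j) - (\<Sum>j\<in>Ne. pU j) = 0"
    using sum_inflow_minus_outflow[OF assms(1,2), of f] by (simp add: sum.distrib sum_subtractf)
  moreover have "(\<Sum>j\<in>Ne. pG j) = (\<Sum>j\<in>NeG. pG j)"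
    using sum.mono_neutral_right[OF assms(1,3)] assms(6) by auto
  moreover have "(\<Sum>j\<in>Ne. pP j) = (\<Sum>j\<in>He. pP j)"
    using sum.mono_neutral_right[OF assms(1,4)] assms(7) by auto
  ultimately show ?thesis unfolding power_feasible_def by linarith
qed

lemma heat_feasible_of_equilibrium:
  assumes "finite Eh" and "finite Nh" and "EhG \<subseteq> Eh"
    and "(\<Sum>x\<in>heat_idx Eh Nh. heat_Ah Eh q s t (case_sum TE TN) x) = 0"
    and "\<forall>j\<in>Eh. 0 = q j * (TN (s j) - TE j) + hG j + hP j - hL j"
    and "\<forall>k\<in>Nh. 0 = (\<Sum>j\<in>{j\<in>Eh. t j = k}. q j * (TE j - TN k))"
    and "\<forall>j\<in>Eh - EhG. hG j = 0"
  shows "heat_feasible Eh EhG hL hP hG"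
proof -
  let ?A = "heat_Ah Eh q s t (case_sum TE TN)"
  have edge: "?A (Inl j) = hG j + hP j - hL j" if "j \<in> Eh" for j
    using assms(5) that by (auto simp: heat_Ah_def algebra_simps)
  have node: "?A (Inr k) = 0" if "k \<in> Nh" for k
  proof -
    have "?A (Inr k) = - (\<Sum>j\<in>{j\<in>Eh. t j = k}. q j * (TE j - TN k))"
      by (simp add: heat_Ah_def sum_negf[symmetric] algebra_simps)
    then show ?thesis using assms(6) that by simp
  qed
  have "(\<Sum>j\<in>Eh. hG j + hP j - hL j) = 0"
    using assms(4) edge node
    unfolding heat_idx_def sum.Plus[OF assms(1,2)] by (simp add: o_def)
  moreover have "(\<Sum>j\<in>Eh. hG j) = (\<Sum>j\<in>EhG. hG j)"
    using sum.mono_neutral_right[OF assms(1,3)] assms(7) by auto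
  ultimately show ?thesis
    unfolding heat_feasible_def by (simp add: sum.distrib sum_subtractf algebra_simps)
qed

theorem proposition1:
  fixes Ne NeG He :: "'b set" and Ee :: "('b \<times> 'b) set"
    and B pnom eta :: "'b \<Rightarrow> 'b \<Rightarrow> real"
    and M D Qe a1 pL :: "'b \<Rightarrow> real"
    and Nh :: "'n set" and Eh Hh EhG EhL :: "'e set" and s t :: "'e \<Rightarrow> 'n"
    and q VE Qh hL :: "'e \<Rightarrow> real" and VN :: "'n \<Rightarrow> real"
    and H :: "'k set" and ib :: "'k \<Rightarrow> 'b" and je :: "'k \<Rightarrow> 'e" and Co :: real
    and \<omega> pG pP pU :: "'b \<Rightarrow> real"
    and TE hG hP :: "'e \<Rightarrow> real" and TN :: "'n \<Rightarrow> real"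
  assumes
    \<comment> \<open>power network\<close>
    fin_Ne: "finite Ne" and Ee_sub: "Ee \<subseteq> Ne \<times> Ne"
    and NeG_sub: "NeG \<subseteq> Ne" and He_sub: "He \<subseteq> Ne"
    and B_pos: "\<forall>(i,j)\<in>Ee. B i j > 0"
    and M_pos: "\<forall>j\<in>Ne. M j > 0" and D_pos: "\<forall>j\<in>Ne. D j > 0"
    and Qe_pos: "\<forall>j\<in>NeG. Qe j > 0" and a1_pos: "\<forall>j\<in>He. a1 j > 0"
    and connected: "\<forall>i\<in>Ne. \<forall>j\<in>Ne. (i, j) \<in> (Ee \<union> Ee\<inverse>)\<^sup>*"
    \<comment> \<open>heat network\<close>
    and fin_Nh: "finite Nh" and fin_Eh: "finite Eh"
    and st_in: "\<forall>j\<in>Eh. s j \<in> Nh \<and> t j \<in> Nh"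
    and Hh_sub: "Hh \<subseteq> Eh" and EhG_sub: "EhG \<subseteq> Eh" and EhL_sub: "EhL \<subseteq> Eh"
    and q_pos: "\<forall>j\<in>Eh. q j > 0" and VE_pos: "\<forall>j\<in>Eh. VE j > 0" and VN_pos: "\<forall>k\<in>Nh. VN k > 0"
    and Qh_pos: "\<forall>j\<in>EhG. Qh j > 0"
    and Ah_one: "\<forall>x\<in>heat_idx Eh Nh. heat_Ah Eh q s t (\<lambda>_. 1) x = 0"
    and one_Ah: "\<forall>T. (\<Sum>x\<in>heat_idx Eh Nh. heat_Ah Eh q s t T x) = 0"
    and Ah_psd: "\<forall>T. (\<Sum>x\<in>heat_idx Eh Nh. T x * heat_Ah Eh q s t T x) \<ge> 0"
    and Ah_simple_zero: "\<forall>T. (\<Sum>x\<in>heat_idx Eh Nh. T x * heat_Ah Eh q s t T x) = 0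
                              \<longrightarrow> (\<exists>c. \<forall>x\<in>heat_idx Eh Nh. T x = c)"
    \<comment> \<open>heat pumps\<close>
    and fin_H: "finite H" and ib_He: "ib ` H = He" and je_Hh: "bij_betw je H Hh"
    \<comment> \<open>equilibrium of the closed loop in Mode 1 (all time derivatives vanish)\<close>
    and eq_line: "\<forall>(i,j)\<in>Ee. \<omega> i - \<omega> j = 0"
    and eq_bus: "\<forall>j\<in>Ne. 0 = - pL j - pP j + pG j - pU j
                 + (\<Sum>i\<in>{i. (i,j) \<in> Ee}. line_flow B pnom eta i j)
                 - (\<Sum>k\<in>{k. (j,k) \<in> Ee}. line_flow B pnom eta j k)"
    and pU_def: "\<forall>j\<in>Ne. pU j = D j * \<omega> j"
    and eq_gen: "\<forall>j\<in>NeG. 0 = - pG j - (1 / Qe j) * \<omega> j"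
    and pG_zero: "\<forall>j\<in>Ne - NeG. pG j = 0"
    and mode1: "\<forall>j\<in>He. pP j = a1 j * \<omega> j"
    and pP_zero: "\<forall>j\<in>Ne - He. pP j = 0"
    and eq_edge: "\<forall>j\<in>Eh. 0 = q j * (TN (s j) - TE j) + hG j + hP j - hL j"
    and eq_node: "\<forall>k\<in>Nh. 0 = (\<Sum>j\<in>{j\<in>Eh. t j = k}. q j * (TE j - TN k))"
    and eq_hgen: "\<forall>j\<in>EhG. 0 = - hG j - (1 / Qh j) * avg_temp Eh Nh VE VN TE TN"
    and hG_zero: "\<forall>j\<in>Eh - EhG. hG j = 0"
    and hP_pump: "\<forall>k\<in>H. hP (je k) = Co * pP (ib k)"
    and hP_zero: "\<forall>j\<in>Eh - Hh. hP j = 0"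
    and hL_zero: "\<forall>j\<in>Eh - EhL. hL j = 0"
  shows
    "(power_feasible Ne NeG He pL pG pP pU
      \<and> (\<forall>g p u. power_feasible Ne NeG He pL g p u \<longrightarrow>
            power_cost Ne NeG He Qe a1 D pG pP pU \<le> power_cost Ne NeG He Qe a1 D g p u))
     \<and> (heat_feasible Eh EhG hL hP hG
      \<and> (\<forall>g. heat_feasible Eh EhG hL hP g \<longrightarrow> heat_cost EhG Qh hG \<le> heat_cost EhG Qh g))"
proof -
  obtain w where "\<forall>j\<in>Ne. \<omega> j = w"
    using constant_on_connected[of Ee \<omega> Ne] eq_line connected by auto
  moreover have pfeas: "power_feasible Ne NeG He pL pG pP pU"
    using power_feasible_of_bus_balance[OF fin_Ne Ee_sub NeG_sub He_sub eq_bus pG_zero pP_zero] .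
  ultimately have popt: "power_feasible Ne NeG He pL g p u \<Longrightarrow>
      power_cost Ne NeG He Qe a1 D pG pP pU \<le> power_cost Ne NeG He Qe a1 D g p u" for g p u
    using power_cost_minimal[OF fin_Ne NeG_sub He_sub Qe_pos a1_pos D_pos _ eq_gen mode1 pU_def]
    by blast
  have hfeas: "heat_feasible Eh EhG hL hP hG"
    using heat_feasible_of_equilibrium[OF fin_Eh fin_Nh EhG_sub _ eq_edge eq_node hG_zero] one_Ah
    by blast
  have "finite EhG" using fin_Eh EhG_sub finite_subset by blast
  then have hopt: "heat_feasible Eh EhG hL hP g \<Longrightarrow> heat_cost EhG Qh hG \<le> heat_cost EhG Qh g"
    for g
    using heat_cost_minimal[OF _ Qh_pos eq_hgen hfeas] by blast
  show ?thesis using pfeas popt hfeas hopt by blast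
qed

end
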